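(* Let $X$ be a Banach space, $T>0$, $p\in\{1,2\}$ the order of the BDF method used (BDF1 or BDF2), and $r\in\{1,\dots,p\}$. Let $f\in C^r([0,T];X)$ and $\widetilde f\in C([0,T];X)$ with $0=f(0)=f'(0)=\dots=f^{(r-1)}(0)=\widetilde f(0)$ (both extended by zero to negative times). Then for all $n$ with $t=t_n=n\Delta t\le T$, $$\big\|(\partial_t^{-1}f)(t)-[(\partial_t^{\Delta t})^{-1}\widetilde f]^n\big\|_X\le Ct\Big[(\Delta t)^r\max_{\tau\in[0,t]}\|f^{(r)}(\tau)\|_X+\max_{\tau\in[0,t]}\|f(\tau)-\widetilde f(\tau)\|_X\Big].$$
   Context: $\partial_t^{-1}f(t)=\int_0^tf(\xi)\,d\xi$. Convolution quadrature: BDF1 has $\delta(z)=1-z$, BDF2 has $\delta(z)=\frac32-2z+\frac12z^2$; the weights $w_j$ are defined by $\frac{\Delta t}{\delta(z)}=\sum_{j\ge0}w_jz^j$, and $[(\partial_t^{\Delta t})^{-1}\widetilde f]^n=\sum_{j=0}^nw_j\widetilde f(t_{n-j})$, $t_j=j\Delta t$. The constant $C$ is independent of $\Delta t$, $f$, $\widetilde f$ and $n$. *)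

theory Defs
  imports "HOL-Analysis.Analysis" "HOL-Computational_Algebra.Formal_Power_Series"
begin

definition bdf_delta :: "nat \<Rightarrow> real fps" where
  "bdf_delta p = (if p = 1 then 1 - fps_X
                  else fps_const (3/2) - fps_const 2 * fps_X + fps_const (1/2) * fps_X ^ 2)"

definition cq_weight :: "nat \<Rightarrow> real \<Rightarrow> nat \<Rightarrow> real" where
  "cq_weight p dt j = fps_nth (fps_const dt * inverse (bdf_delta p)) j"

text \<open>Discrete integral [(partial_t^dt)^{-1} g]^n = sum_{j=0}^n w_j g(t_{n-j}), t_j = j dt.\<close>
definition cq_integral :: "nat \<Rightarrow> real \<Rightarrow> (real \<Rightarrow> 'a::real_normed_vector) \<Rightarrow> nat \<Rightarrow> 'a" where
  "cq_integral p dt g n = (\<Sum>j=0..n. cq_weight p dt j *\<^sub>R g (real (n - j) * dt))"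

text \<open>Df k is the k-th derivative of f = Df 0, f in C^r([0,T];X) (one-sided at endpoints).\<close>
definition Cr_derivs :: "nat \<Rightarrow> real \<Rightarrow> (nat \<Rightarrow> real \<Rightarrow> 'a::real_normed_vector) \<Rightarrow> bool" where
  "Cr_derivs r T Df \<longleftrightarrow>
     (\<forall>k<r. \<forall>t\<in>{0..T}. (Df k has_vector_derivative Df (Suc k) t) (at t within {0..T}))
     \<and> continuous_on {0..T} (Df r)"

end

theory Submission
  imports Defs
begin

text \<open>
  The BDF1 weights are all \<open>\<Delta>t\<close>, so the discrete integral is the right-endpoint rectangle
  rule; the BDF2 weights are \<open>\<Delta>t (1 - 3^(-(j+1)))\<close>, i.e. the rectangle rule minus
  \<open>\<Delta>t\<close> times a geometrically weighted tail.  That tail is at most half the maximum of the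
  integrand, and it equals half the last value up to a quarter of the largest increment, which
  turns the BDF2 rule into the trapezoidal rule.  The error splits into the consistency error
  of the rule applied to \<open>f\<close>, bounded by local Taylor estimates of the rectangle and
  trapezoidal rules, plus the rule applied to \<open>f - f\<^sup>~\<close>, which is stable because all weights
  lie in \<open>[0, \<Delta>t]\<close> and the term at \<open>t\<^sub>0 = 0\<close> vanishes.
\<close>

lemma cq_weight_BDF1: "cq_weight 1 dt j = dt"
proof -
  have "inverse (bdf_delta 1) = Abs_fps (\<lambda>_. 1)"
    unfolding bdf_delta_def
    by (intro fps_inverse_unique fps_ext) (auto simp: algebra_simps)
  then show ?thesis by (simp add: cq_weight_def)
qed

lemma cq_weight_BDF2: "cq_weight 2 dt j = dt * (1 - (1/3) ^ Suc j)"
proof -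
  \<comment> \<open>Partial fractions: \<open>1 / \<delta>(z) = 2 / ((1 - z)(3 - z)) = 1/(1 - z) - (1/3)/(1 - z/3)\<close>.\<close>
  define A :: "real fps" where "A = Abs_fps (\<lambda>j. 1 - (1/3) ^ Suc j)"
  have nth_A: "fps_nth A k = 1 - (1/3) ^ Suc k" for k
    by (simp add: A_def)
  have "fps_nth (bdf_delta 2 * A) n = fps_nth 1 n" for n
  proof -
    have "bdf_delta 2 * A = fps_const (3/2) * A - fps_const 2 * (fps_X * A) + fps_const (1/2) * (fps_X ^ 2 * A)"
      by (simp add: bdf_delta_def algebra_simps)
    then have expand: "fps_nth (bdf_delta 2 * A) n
        = 3/2 * fps_nth A n - 2 * fps_nth (fps_X * A) n + 1/2 * fps_nth (fps_X ^ 2 * A) n"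
      by simp
    have shift1: "fps_nth (fps_X * A) n = (if n = 0 then 0 else fps_nth A (n - 1))"
      by (cases n) simp_all
    have shift2: "fps_nth (fps_X ^ 2 * A) n = (if n < 2 then 0 else fps_nth A (n - 2))"
      by (simp add: fps_X_power_mult_nth)
    show ?thesis
      unfolding expand shift1 shift2 nth_A by (cases n; cases "n - 1") (simp_all add: field_simps)
  qed
  then have "inverse (bdf_delta 2) = A"
    by (intro fps_inverse_unique fps_ext)
  then show ?thesis by (simp add: cq_weight_def A_def)
qed

definition grid_sum :: "real \<Rightarrow> (real \<Rightarrow> 'a::real_normed_vector) \<Rightarrow> nat \<Rightarrow> 'a" where
  "grid_sum dt h n = (\<Sum>k\<le>n. h (real k * dt))"

definition bdf2_tail :: "real \<Rightarrow> (real \<Rightarrow> 'a::real_normed_vector) \<Rightarrow> nat \<Rightarrow> 'a" where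
  "bdf2_tail dt h n = (\<Sum>j\<le>n. ((1/3) ^ Suc j) *\<^sub>R h (real (n - j) * dt))"

lemma grid_sum_Suc: "grid_sum dt h (Suc n) = grid_sum dt h n + h (real (Suc n) * dt)"
  by (simp add: grid_sum_def)

lemma bdf2_tail_Suc: "bdf2_tail dt h (Suc n) = (1/3) *\<^sub>R (h (real (Suc n) * dt) + bdf2_tail dt h n)"
  unfolding bdf2_tail_def atMost_atLeast0 sum.atLeast0_atMost_Suc_shift
  by (simp add: scaleR_sum_right scaleR_add_right)

lemma cq_integral_BDF1: "cq_integral 1 dt h n = dt *\<^sub>R grid_sum dt h n"
proof -
  have "(\<Sum>j=0..n. h (real (n - j) * dt)) = (\<Sum>k=0..n. h (real k * dt))"
    by (subst sum.atLeastAtMost_rev) (auto intro: sum.cong)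
  then show ?thesis
    unfolding cq_integral_def cq_weight_BDF1 grid_sum_def atMost_atLeast0 by (simp flip: scaleR_sum_right)
qed

lemma cq_integral_BDF2: "cq_integral 2 dt h n = dt *\<^sub>R grid_sum dt h n - dt *\<^sub>R bdf2_tail dt h n"
proof -
  have "cq_integral 2 dt h n = cq_integral 1 dt h n - dt *\<^sub>R bdf2_tail dt h n"
    unfolding cq_integral_def cq_weight_BDF1 cq_weight_BDF2 bdf2_tail_def atMost_atLeast0
      scaleR_sum_right sum_subtractf[symmetric]
    by (intro sum.cong) (simp_all add: algebra_simps)
  then show ?thesis unfolding cq_integral_BDF1 .
qed

lemma cq_integral_diff:
  "cq_integral p dt (\<lambda>s. f s - g s) n = cq_integral p dt f n - cq_integral p dt g n"
  by (simp add: cq_integral_def scaleR_diff_right sum_subtractf)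

lemma cq_weight_bounds:
  assumes "p \<in> {1, 2}" "0 \<le> dt"
  shows "0 \<le> cq_weight p dt j \<and> cq_weight p dt j \<le> dt"
proof -
  have "(1/3::real) ^ Suc j \<le> 1"
    by (rule power_le_one) simp_all
  then have "0 \<le> 1 - (1/3::real) ^ Suc j" "1 - (1/3::real) ^ Suc j \<le> 1"
    by simp_all
  then have "0 \<le> cq_weight 2 dt j \<and> cq_weight 2 dt j \<le> dt"
    unfolding cq_weight_BDF2 using \<open>0 \<le> dt\<close> by (simp add: mult_left_le)
  moreover have "0 \<le> cq_weight 1 dt j \<and> cq_weight 1 dt j \<le> dt"
    unfolding cq_weight_BDF1 using \<open>0 \<le> dt\<close> by simp
  ultimately show ?thesis using assms(1) by blast
qed

lemma cq_integral_norm_le: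
  assumes "p \<in> {1, 2}" "0 \<le> dt" "g 0 = 0"
    and bound: "\<And>k. k \<le> n \<Longrightarrow> norm (g (real k * dt)) \<le> E"
  shows "norm (cq_integral p dt g n) \<le> real n * dt * E"
proof -
  have "cq_integral p dt g n = (\<Sum>j<n. cq_weight p dt j *\<^sub>R g (real (n - j) * dt))"
    using \<open>g 0 = 0\<close> by (simp add: cq_integral_def atLeast0AtMost lessThan_Suc_atMost[symmetric])
  also have "norm \<dots> \<le> (\<Sum>j<n. dt * E)"
  proof (rule sum_norm_le)
    fix j assume "j \<in> {..<n}"
    have "norm (g (real (n - j) * dt)) \<le> E" by (rule bound) simp
    then show "norm (cq_weight p dt j *\<^sub>R g (real (n - j) * dt)) \<le> dt * E"
      using cq_weight_bounds[OF assms(1,2), of j] by (auto intro: mult_mono)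
  qed
  finally show ?thesis by simp
qed

lemma bdf2_tail_norm_le:
  assumes "\<And>k. k \<le> n \<Longrightarrow> norm (h (real k * dt)) \<le> E"
  shows "norm (bdf2_tail dt h n) \<le> E / 2"
  using assms
proof (induction n)
  case 0
  then show ?case using norm_ge_zero[of "h 0"] by (simp add: bdf2_tail_def, linarith)
next
  case (Suc n)
  have "norm (bdf2_tail dt h (Suc n)) \<le> (1/3) * (norm (h (real (Suc n) * dt)) + norm (bdf2_tail dt h n))"
    unfolding bdf2_tail_Suc by (simp add: norm_triangle_ineq)
  also have "\<dots> \<le> (1/3) * (E + E / 2)"
    using Suc.IH Suc.prems Suc.prems[of "Suc n"] by (intro mult_left_mono add_mono) auto
  finally show ?case by simp
qed

text \<open>For constant \<open>h = d\<close> the recursion \<open>x \<mapsto> (d + x)/3\<close> has the fixed point \<open>d/2\<close>, so only the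
  increments of \<open>h\<close> move the tail away from \<open>h(t\<^sub>n)/2\<close>.\<close>
lemma bdf2_tail_minus_half_norm_le:
  assumes "h 0 = 0" "0 \<le> K"
    and incr: "\<And>k. k < n \<Longrightarrow> norm (h (real (Suc k) * dt) - h (real k * dt)) \<le> K"
  shows "norm (bdf2_tail dt h n - (1/2) *\<^sub>R h (real n * dt)) \<le> K / 4"
  using incr
proof (induction n)
  case 0
  then show ?case using assms(1,2) by (simp add: bdf2_tail_def)
next
  case (Suc n)
  have "bdf2_tail dt h (Suc n) - (1/2) *\<^sub>R h (real (Suc n) * dt)
     = (1/3) *\<^sub>R (bdf2_tail dt h n - (1/2) *\<^sub>R h (real n * dt))
       - (1/6) *\<^sub>R (h (real (Suc n) * dt) - h (real n * dt))"
    unfolding bdf2_tail_Suc by (simp add: algebra_simps flip: scaleR_add_left)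
  then have "norm (bdf2_tail dt h (Suc n) - (1/2) *\<^sub>R h (real (Suc n) * dt))
      \<le> (1/3) * norm (bdf2_tail dt h n - (1/2) *\<^sub>R h (real n * dt))
       + (1/6) * norm (h (real (Suc n) * dt) - h (real n * dt))"
    by (auto intro: order_trans[OF norm_triangle_ineq4])
  also have "\<dots> \<le> (1/3) * (K / 4) + (1/6) * K"
    using Suc by (intro add_mono mult_left_mono) auto
  finally show ?case by simp
qed

lemma norm_diff_le_of_vector_derivative_bound:
  fixes f f' :: "real \<Rightarrow> 'a::real_normed_vector"
  assumes "a \<le> x" "x \<le> y" "y \<le> b"
    and deriv: "\<And>s. s \<in> {a..b} \<Longrightarrow> (f has_vector_derivative f' s) (at s within {a..b})"
    and bound: "\<And>s. s \<in> {x..y} \<Longrightarrow> norm (f' s) \<le> M"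
  shows "norm (f y - f x) \<le> M * (y - x)"
proof -
  have "norm (f y - f x) \<le> M * norm (y - x)"
  proof (rule differentiable_bound[of "{x..y}" f "\<lambda>s h. h *\<^sub>R f' s" M])
    show "(f has_derivative (\<lambda>h. h *\<^sub>R f' s)) (at s within {x..y})" if "s \<in> {x..y}" for s
      using deriv[of s] that assms(1-3) has_vector_derivative_within_subset[of f "f' s" s "{a..b}" "{x..y}"]
      by (auto simp: has_vector_derivative_def)
    show "onorm (\<lambda>h. h *\<^sub>R f' s) \<le> M" if "s \<in> {x..y}" for s
      using bound[OF that] by (intro onorm_le) (simp add: mult.commute[of M] mult_left_mono)
  qed (use assms(2) in auto)
  then show ?thesis using assms(2) by simp
qed

lemma integral_right_rectangle_error:
  fixes f f' :: "real \<Rightarrow> 'a::banach"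
  assumes "a \<le> b"
    and deriv: "\<And>s. s \<in> {a..b} \<Longrightarrow> (f has_vector_derivative f' s) (at s within {a..b})"
    and bound: "\<And>s. s \<in> {a..b} \<Longrightarrow> norm (f' s) \<le> M"
  shows "norm (integral {a..b} f - (b - a) *\<^sub>R f b) \<le> M * (b - a)^2"
proof -
  have cont: "continuous_on {a..b} f"
    using deriv by (rule continuous_on_vector_derivative)
  define g where "g s = integral {a..s} f - (s - a) *\<^sub>R f b" for s
  have "(g has_vector_derivative (f s - f b)) (at s within {a..b})" if "s \<in> {a..b}" for s
    unfolding g_def using that
    by (auto intro!: derivative_eq_intros integral_has_vector_derivative[OF cont])
  moreover have "norm (f s - f b) \<le> M * (b - a)" if "s \<in> {a..b}" for s
  proof -
    have "norm (f b - f s) \<le> M * (b - s)"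
      using that bound by (intro norm_diff_le_of_vector_derivative_bound[OF _ _ _ deriv]) auto
    also have "\<dots> \<le> M * (b - a)"
      using that bound[of a] \<open>a \<le> b\<close> by (intro mult_left_mono) (auto intro: order_trans[OF norm_ge_zero])
    finally show ?thesis by (simp add: norm_minus_commute)
  qed
  ultimately have "norm (g b - g a) \<le> (M * (b - a)) * (b - a)"
    using \<open>a \<le> b\<close> by (intro norm_diff_le_of_vector_derivative_bound[of a a b b g]) auto
  then show ?thesis by (simp add: g_def power2_eq_square mult.assoc)
qed

lemma integral_trapezoid_error:
  fixes f f' f'' :: "real \<Rightarrow> 'a::banach"
  assumes "a \<le> b"
    and deriv: "\<And>s. s \<in> {a..b} \<Longrightarrow> (f has_vector_derivative f' s) (at s within {a..b})"
    and deriv2: "\<And>s. s \<in> {a..b} \<Longrightarrow> (f' has_vector_derivative f'' s) (at s within {a..b})"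
    and bound: "\<And>s. s \<in> {a..b} \<Longrightarrow> norm (f'' s) \<le> M"
  shows "norm (integral {a..b} f - ((b - a) / 2) *\<^sub>R (f a + f b)) \<le> M * (b - a)^3"
proof -
  have cont: "continuous_on {a..b} f"
    using deriv by (rule continuous_on_vector_derivative)
  have M: "0 \<le> M"
    using bound[of a] \<open>a \<le> b\<close> by (auto intro: order_trans[OF norm_ge_zero])
  define g where "g s = integral {a..s} f - ((s - a) / 2) *\<^sub>R (f a + f s)" for s
  have "(g has_vector_derivative (1/2) *\<^sub>R ((f s - f a) - (s - a) *\<^sub>R f' s)) (at s within {a..b})"
    if "s \<in> {a..b}" for s
    unfolding g_def using that
    by (auto intro!: derivative_eq_intros integral_has_vector_derivative[OF cont] deriv
        simp: diff_divide_distrib algebra_simps simp flip: scaleR_add_left)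
  moreover have "norm ((1/2) *\<^sub>R ((f s - f a) - (s - a) *\<^sub>R f' s)) \<le> M * (b - a)^2"
    if s: "s \<in> {a..b}" for s
  proof -
    define h where "h u = f u - u *\<^sub>R f' s" for u
    have "(h has_vector_derivative (f' u - f' s)) (at u within {a..b})" if "u \<in> {a..b}" for u
      unfolding h_def using that by (auto intro!: derivative_eq_intros deriv)
    moreover have "norm (f' u - f' s) \<le> M * (s - a)" if "u \<in> {a..s}" for u
    proof -
      have "norm (f' s - f' u) \<le> M * (s - u)"
        using that s bound by (intro norm_diff_le_of_vector_derivative_bound[OF _ _ _ deriv2]) auto
      also have "\<dots> \<le> M * (s - a)"
        using that M by (intro mult_left_mono) auto
      finally show ?thesis by (simp add: norm_minus_commute)
    qed
    ultimately have "norm (h s - h a) \<le> M * (s - a) * (s - a)"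
      using s by (intro norm_diff_le_of_vector_derivative_bound[of a a s b h]) auto
    also have "\<dots> \<le> M * (b - a)^2"
      using s M unfolding power2_eq_square mult.assoc by (intro mult_left_mono mult_mono) auto
    moreover have "(f s - f a) - (s - a) *\<^sub>R f' s = h s - h a"
      by (simp add: h_def algebra_simps)
    moreover have "0 \<le> M * (b - a)^2"
      using M by simp
    ultimately show ?thesis by simp
  qed
  ultimately have "norm (g b - g a) \<le> (M * (b - a)^2) * (b - a)"
    using \<open>a \<le> b\<close> by (intro norm_diff_le_of_vector_derivative_bound[of a a b b g]) auto
  then show ?thesis by (simp add: g_def power3_eq_cube power2_eq_square mult.assoc)
qed

lemma integral_eq_sum_over_grid:
  fixes f :: "real \<Rightarrow> 'a::banach"
  assumes "0 \<le> dt" "f integrable_on {0..real n * dt}"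
  shows "integral {0..real n * dt} f = (\<Sum>k<n. integral {real k * dt..real (Suc k) * dt} f)"
  using assms(2)
proof (induction n)
  case (Suc n)
  have "{0..real n * dt} \<subseteq> {0..real (Suc n) * dt}"
    using \<open>0 \<le> dt\<close> by (auto intro: mult_right_mono)
  then have "f integrable_on {0..real n * dt}"
    using Suc.prems integrable_subinterval_real by blast
  moreover have "integral {0..real (Suc n) * dt} f
      = integral {0..real n * dt} f + integral {real n * dt..real (Suc n) * dt} f"
    using \<open>0 \<le> dt\<close> Suc.prems
    by (intro Henstock_Kurzweil_Integration.integral_combine[symmetric]) (auto intro: mult_right_mono)
  ultimately show ?case using Suc.IH by simp
qed simp

lemma grid_sum_right_endpoints:
  "h 0 = 0 \<Longrightarrow> grid_sum dt h n = (\<Sum>k<n. h (real (Suc k) * dt))"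
  by (induction n) (simp_all add: grid_sum_Suc, simp add: grid_sum_def)

lemma grid_sum_trapezoidal:
  "h 0 = 0 \<Longrightarrow> dt *\<^sub>R grid_sum dt h n - (dt / 2) *\<^sub>R h (real n * dt)
     = (\<Sum>k<n. (dt / 2) *\<^sub>R (h (real k * dt) + h (real (Suc k) * dt)))"
proof (induction n)
  case 0
  then show ?case by (simp add: grid_sum_def)
next
  case (Suc n)
  then show ?case
    by (simp add: grid_sum_Suc algebra_simps flip: Suc.IH scaleR_add_left)
qed

lemma grid_subinterval:
  assumes "0 \<le> dt" "k < n"
  shows "{real k * dt..real (Suc k) * dt} \<subseteq> {0..real n * dt}"
proof -
  have "real (Suc k) * dt \<le> real n * dt"
    using assms by (intro mult_right_mono) auto
  moreover have "0 \<le> real k * dt"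
    using assms(1) by simp
  ultimately show ?thesis by auto
qed

lemma grid_point_in_interval: "0 \<le> dt \<Longrightarrow> k \<le> n \<Longrightarrow> real k * dt \<in> {0..real n * dt}"
  by (auto intro: mult_right_mono)

lemma cq_integral_BDF1_error:
  fixes f f' :: "real \<Rightarrow> 'a::banach"
  assumes "0 < dt" "f 0 = 0"
    and deriv: "\<And>s. s \<in> {0..real n * dt} \<Longrightarrow> (f has_vector_derivative f' s) (at s within {0..real n * dt})"
    and bound: "\<And>s. s \<in> {0..real n * dt} \<Longrightarrow> norm (f' s) \<le> M"
  shows "norm (integral {0..real n * dt} f - cq_integral 1 dt f n) \<le> real n * dt * (dt * M)"
proof -
  have "continuous_on {0..real n * dt} f"
    using deriv by (rule continuous_on_vector_derivative)
  then have "f integrable_on {0..real n * dt}"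
    by (rule integrable_continuous_real)
  then have "integral {0..real n * dt} f - cq_integral 1 dt f n
      = (\<Sum>k<n. integral {real k * dt..real (Suc k) * dt} f - dt *\<^sub>R f (real (Suc k) * dt))"
    using \<open>0 < dt\<close> \<open>f 0 = 0\<close> unfolding cq_integral_BDF1
    by (simp add: integral_eq_sum_over_grid grid_sum_right_endpoints scaleR_sum_right sum_subtractf)
  also have "norm \<dots> \<le> (\<Sum>k<n. M * dt^2)"
  proof (rule sum_norm_le)
    fix k assume "k \<in> {..<n}"
    then have sub: "{real k * dt..real (Suc k) * dt} \<subseteq> {0..real n * dt}"
      using \<open>0 < dt\<close> by (intro grid_subinterval) auto
    have "norm (integral {real k * dt..real (Suc k) * dt} f
        - (real (Suc k) * dt - real k * dt) *\<^sub>R f (real (Suc k) * dt))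
        \<le> M * (real (Suc k) * dt - real k * dt)^2"
    proof (rule integral_right_rectangle_error)
      fix s assume "s \<in> {real k * dt..real (Suc k) * dt}"
      then show "(f has_vector_derivative f' s) (at s within {real k * dt..real (Suc k) * dt})"
        and "norm (f' s) \<le> M"
        using sub deriv bound has_vector_derivative_within_subset by blast+
    qed (use \<open>0 < dt\<close> in simp)
    then show "norm (integral {real k * dt..real (Suc k) * dt} f - dt *\<^sub>R f (real (Suc k) * dt))
        \<le> M * dt^2"
      by (simp add: algebra_simps)
  qed
  finally show ?thesis by (simp add: power2_eq_square algebra_simps)
qed

lemma cq_integral_BDF2_error_first_order:
  fixes f f' :: "real \<Rightarrow> 'a::banach"
  assumes "0 < dt" "f 0 = 0"
    and deriv: "\<And>s. s \<in> {0..real n * dt} \<Longrightarrow> (f has_vector_derivative f' s) (at s within {0..real n * dt})"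
    and bound: "\<And>s. s \<in> {0..real n * dt} \<Longrightarrow> norm (f' s) \<le> M"
  shows "norm (integral {0..real n * dt} f - cq_integral 2 dt f n) \<le> 2 * (real n * dt) * (dt * M)"
proof -
  define t where "t = real n * dt"
  have "0 \<le> t" using \<open>0 < dt\<close> by (simp add: t_def)
  then have "0 \<le> M" using bound[of 0] by (auto simp: t_def intro: order_trans[OF norm_ge_zero])
  have "norm (f (real k * dt)) \<le> M * t" if "k \<le> n" for k
  proof -
    have k: "real k * dt \<in> {0..t}"
      unfolding t_def using \<open>0 < dt\<close> that by (intro grid_point_in_interval) auto
    have "norm (f (real k * dt) - f 0) \<le> M * (real k * dt - 0)"
      using k unfolding t_def
      by (intro norm_diff_le_of_vector_derivative_bound[OF _ _ _ deriv]) (auto intro!: bound)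
    also have "\<dots> \<le> M * t"
      using k \<open>0 \<le> M\<close> by (intro mult_left_mono) auto
    finally show ?thesis using \<open>f 0 = 0\<close> by simp
  qed
  then have tail: "norm (bdf2_tail dt f n) \<le> M * t / 2"
    by (rule bdf2_tail_norm_le)
  have "integral {0..t} f - cq_integral 2 dt f n
      = (integral {0..t} f - cq_integral 1 dt f n) + dt *\<^sub>R bdf2_tail dt f n"
    unfolding cq_integral_BDF1 cq_integral_BDF2 by simp
  also have "norm \<dots> \<le> t * (dt * M) + dt * (M * t / 2)"
    using cq_integral_BDF1_error[OF assms] tail \<open>0 < dt\<close>
    by (intro order_trans[OF norm_triangle_ineq] add_mono) (auto simp: t_def)
  also have "\<dots> \<le> 2 * t * (dt * M)"
    using \<open>0 \<le> t\<close> \<open>0 < dt\<close> \<open>0 \<le> M\<close> by (simp add: algebra_simps)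
  finally show ?thesis by (simp add: t_def)
qed

lemma composite_trapezoid_error:
  fixes f f' f'' :: "real \<Rightarrow> 'a::banach"
  assumes "0 < dt" "f 0 = 0"
    and deriv: "\<And>s. s \<in> {0..real n * dt} \<Longrightarrow> (f has_vector_derivative f' s) (at s within {0..real n * dt})"
    and deriv2: "\<And>s. s \<in> {0..real n * dt} \<Longrightarrow> (f' has_vector_derivative f'' s) (at s within {0..real n * dt})"
    and bound: "\<And>s. s \<in> {0..real n * dt} \<Longrightarrow> norm (f'' s) \<le> M"
  shows "norm (integral {0..real n * dt} f - (dt *\<^sub>R grid_sum dt f n - (dt / 2) *\<^sub>R f (real n * dt)))
    \<le> real n * dt * (dt^2 * M)"
proof -
  have "continuous_on {0..real n * dt} f"
    using deriv by (rule continuous_on_vector_derivative)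
  then have "f integrable_on {0..real n * dt}"
    by (rule integrable_continuous_real)
  then have "integral {0..real n * dt} f - (dt *\<^sub>R grid_sum dt f n - (dt / 2) *\<^sub>R f (real n * dt))
      = (\<Sum>k<n. integral {real k * dt..real (Suc k) * dt} f
           - (dt / 2) *\<^sub>R (f (real k * dt) + f (real (Suc k) * dt)))"
    using \<open>0 < dt\<close> \<open>f 0 = 0\<close>
    by (simp add: integral_eq_sum_over_grid grid_sum_trapezoidal sum_subtractf)
  also have "norm \<dots> \<le> (\<Sum>k<n. M * dt^3)"
  proof (rule sum_norm_le)
    fix k assume "k \<in> {..<n}"
    then have sub: "{real k * dt..real (Suc k) * dt} \<subseteq> {0..real n * dt}"
      using \<open>0 < dt\<close> by (intro grid_subinterval) auto
    have "norm (integral {real k * dt..real (Suc k) * dt} f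
        - ((real (Suc k) * dt - real k * dt) / 2) *\<^sub>R (f (real k * dt) + f (real (Suc k) * dt)))
        \<le> M * (real (Suc k) * dt - real k * dt)^3"
    proof (rule integral_trapezoid_error)
      fix s assume "s \<in> {real k * dt..real (Suc k) * dt}"
      then show "(f has_vector_derivative f' s) (at s within {real k * dt..real (Suc k) * dt})"
        and "(f' has_vector_derivative f'' s) (at s within {real k * dt..real (Suc k) * dt})"
        and "norm (f'' s) \<le> M"
        using sub deriv deriv2 bound has_vector_derivative_within_subset by blast+
    qed (use \<open>0 < dt\<close> in simp)
    then show "norm (integral {real k * dt..real (Suc k) * dt} f
        - (dt / 2) *\<^sub>R (f (real k * dt) + f (real (Suc k) * dt))) \<le> M * dt^3"
      by (simp add: algebra_simps)
  qed
  finally show ?thesis by (simp add: power2_eq_square power3_eq_cube algebra_simps)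
qed

lemma cq_integral_BDF2_error_second_order:
  fixes f f' f'' :: "real \<Rightarrow> 'a::banach"
  assumes "0 < dt" "f 0 = 0" "f' 0 = 0"
    and deriv: "\<And>s. s \<in> {0..real n * dt} \<Longrightarrow> (f has_vector_derivative f' s) (at s within {0..real n * dt})"
    and deriv2: "\<And>s. s \<in> {0..real n * dt} \<Longrightarrow> (f' has_vector_derivative f'' s) (at s within {0..real n * dt})"
    and bound: "\<And>s. s \<in> {0..real n * dt} \<Longrightarrow> norm (f'' s) \<le> M"
  shows "norm (integral {0..real n * dt} f - cq_integral 2 dt f n) \<le> 2 * (real n * dt) * (dt^2 * M)"
proof -
  define t where "t = real n * dt"
  have "0 \<le> t" using \<open>0 < dt\<close> by (simp add: t_def)
  then have "0 \<le> M" using bound[of 0] by (auto simp: t_def intro: order_trans[OF norm_ge_zero])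
  have f'_bound: "norm (f' s) \<le> M * t" if "s \<in> {0..t}" for s
  proof -
    have "norm (f' s - f' 0) \<le> M * (s - 0)"
      using that unfolding t_def
      by (intro norm_diff_le_of_vector_derivative_bound[OF _ _ _ deriv2]) (auto intro!: bound)
    also have "\<dots> \<le> M * t"
      using that \<open>0 \<le> M\<close> by (intro mult_left_mono) auto
    finally show ?thesis using \<open>f' 0 = 0\<close> by simp
  qed
  have "norm (f (real (Suc k) * dt) - f (real k * dt)) \<le> M * t * dt" if "k < n" for k
  proof -
    have sub: "{real k * dt..real (Suc k) * dt} \<subseteq> {0..t}"
      unfolding t_def using \<open>0 < dt\<close> that by (intro grid_subinterval) auto
    have "norm (f (real (Suc k) * dt) - f (real k * dt)) \<le> M * t * (real (Suc k) * dt - real k * dt)"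
    proof (rule norm_diff_le_of_vector_derivative_bound[OF _ _ _ deriv])
      show "norm (f' s) \<le> M * t" if "s \<in> {real k * dt..real (Suc k) * dt}" for s
        using sub that f'_bound by blast
    qed (use sub \<open>0 < dt\<close> in \<open>auto simp: t_def\<close>)
    then show ?thesis by (simp add: algebra_simps)
  qed
  then have tail: "norm (bdf2_tail dt f n - (1/2) *\<^sub>R f t) \<le> M * t * dt / 4"
    unfolding t_def
    using \<open>f 0 = 0\<close> \<open>0 \<le> M\<close> \<open>0 \<le> t\<close> \<open>0 < dt\<close>
    by (intro bdf2_tail_minus_half_norm_le) (simp_all add: t_def)
  have "integral {0..t} f - cq_integral 2 dt f n
      = (integral {0..t} f - (dt *\<^sub>R grid_sum dt f n - (dt / 2) *\<^sub>R f t))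
        + dt *\<^sub>R (bdf2_tail dt f n - (1/2) *\<^sub>R f t)"
    unfolding cq_integral_BDF2 by (simp add: algebra_simps)
  also have "norm \<dots> \<le> t * (dt^2 * M) + dt * (M * t * dt / 4)"
    using composite_trapezoid_error[OF \<open>0 < dt\<close> \<open>f 0 = 0\<close> deriv deriv2 bound] tail \<open>0 < dt\<close>
    by (intro order_trans[OF norm_triangle_ineq] add_mono) (auto simp: t_def)
  also have "\<dots> \<le> 2 * t * (dt^2 * M)"
    using \<open>0 \<le> t\<close> \<open>0 < dt\<close> \<open>0 \<le> M\<close> by (simp add: power2_eq_square algebra_simps)
  finally show ?thesis by (simp add: t_def)
qed

lemma norm_le_SUP_norm:
  fixes g :: "'b::topological_space \<Rightarrow> 'a::real_normed_vector"
  assumes "compact S" "continuous_on S g" "x \<in> S"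
  shows "norm (g x) \<le> (SUP y\<in>S. norm (g y))"
proof -
  have "bdd_above ((\<lambda>y. norm (g y)) ` S)"
    using assms(1,2) by (intro bounded_imp_bdd_above compact_imp_bounded compact_continuous_image
        continuous_on_norm)
  then show ?thesis using assms(3) by (rule cSUP_upper2) simp
qed

lemma cq_integral_consistency:
  fixes Df :: "nat \<Rightarrow> real \<Rightarrow> 'a::banach"
  assumes "p \<in> {1, 2}" "1 \<le> r" "r \<le> p" "0 < dt"
    and deriv: "\<And>k s. k < r \<Longrightarrow> s \<in> {0..real n * dt} \<Longrightarrow>
      (Df k has_vector_derivative Df (Suc k) s) (at s within {0..real n * dt})"
    and zero: "\<And>k. k < r \<Longrightarrow> Df k 0 = 0"
    and bound: "\<And>s. s \<in> {0..real n * dt} \<Longrightarrow> norm (Df r s) \<le> M"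
  shows "norm (integral {0..real n * dt} (Df 0) - cq_integral p dt (Df 0) n)
    \<le> 2 * (real n * dt) * (dt ^ r * M)"
proof -
  have "0 \<le> M"
    using bound[of 0] \<open>0 < dt\<close> by (auto intro: order_trans[OF norm_ge_zero])
  consider "p = 1" "r = 1" | "p = 2" "r = 1" | "p = 2" "r = 2"
    using assms(1-3) by fastforce
  then show ?thesis
  proof cases
    case 1
    have "norm (integral {0..real n * dt} (Df 0) - cq_integral 1 dt (Df 0) n)
        \<le> real n * dt * (dt * M)"
      using 1 zero deriv bound \<open>0 < dt\<close> by (intro cq_integral_BDF1_error) auto
    also have "\<dots> \<le> 2 * (real n * dt) * (dt ^ r * M)"
      using 1 \<open>0 < dt\<close> \<open>0 \<le> M\<close> by simp
    finally show ?thesis unfolding \<open>p = 1\<close> .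
  next
    case 2
    have "norm (integral {0..real n * dt} (Df 0) - cq_integral 2 dt (Df 0) n)
        \<le> 2 * (real n * dt) * (dt * M)"
      by (rule cq_integral_BDF2_error_first_order) (use 2 \<open>0 < dt\<close> zero deriv bound in auto)
    then show ?thesis using 2 by simp
  next
    case 3
    have "norm (integral {0..real n * dt} (Df 0) - cq_integral 2 dt (Df 0) n)
        \<le> 2 * (real n * dt) * (dt^2 * M)"
      by (rule cq_integral_BDF2_error_second_order[where f' = "Df 1" and f'' = "Df 2"]) (use 3 \<open>0 < dt\<close> zero deriv deriv[of 1, unfolded Suc_1] bound in auto)
    then show ?thesis using 3 by simp
  qed
qed

lemma cq_integral_error:
  fixes Df :: "nat \<Rightarrow> real \<Rightarrow> 'a::banach"
  assumes "p \<in> {1, 2}" "1 \<le> r" "r \<le> p" "0 < dt"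
    and deriv: "\<And>k s. k < r \<Longrightarrow> s \<in> {0..real n * dt} \<Longrightarrow>
      (Df k has_vector_derivative Df (Suc k) s) (at s within {0..real n * dt})"
    and zero: "\<And>k. k < r \<Longrightarrow> Df k 0 = 0" "ft 0 = 0"
    and bound: "\<And>s. s \<in> {0..real n * dt} \<Longrightarrow> norm (Df r s) \<le> M"
    and perturbation: "\<And>s. s \<in> {0..real n * dt} \<Longrightarrow> norm (Df 0 s - ft s) \<le> E"
  shows "norm (integral {0..real n * dt} (Df 0) - cq_integral p dt ft n)
    \<le> 2 * (real n * dt) * (dt ^ r * M + E)"
proof -
  define t where "t = real n * dt"
  have "0 \<le> t" using \<open>0 < dt\<close> by (simp add: t_def)
  have "0 \<le> E"
    using perturbation[of 0] \<open>0 < dt\<close> by (auto intro: order_trans[OF norm_ge_zero])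
  have stability: "norm (cq_integral p dt (\<lambda>s. Df 0 s - ft s) n) \<le> t * E"
    unfolding t_def using assms(1,2,4) zero
    by (intro cq_integral_norm_le perturbation grid_point_in_interval) auto
  have consistency: "norm (integral {0..t} (Df 0) - cq_integral p dt (Df 0) n) \<le> 2 * t * (dt ^ r * M)"
    unfolding t_def using assms(1-4) deriv zero(1) bound by (rule cq_integral_consistency)
  have "integral {0..t} (Df 0) - cq_integral p dt ft n
      = (integral {0..t} (Df 0) - cq_integral p dt (Df 0) n) + cq_integral p dt (\<lambda>s. Df 0 s - ft s) n"
    by (simp add: cq_integral_diff)
  also have "norm \<dots> \<le> 2 * t * (dt ^ r * M) + t * E"
    using consistency stability by (intro order_trans[OF norm_triangle_ineq] add_mono)
  also have "\<dots> \<le> 2 * t * (dt ^ r * M + E)"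
    using \<open>0 \<le> t\<close> \<open>0 \<le> E\<close> by (simp add: algebra_simps)
  finally show ?thesis by (simp add: t_def)
qed

theorem lemma6p1:
  fixes T :: real and p r :: nat
  assumes "T > 0" and "p \<in> {1, 2}" and "1 \<le> r" and "r \<le> p"
  shows "\<exists>C. \<forall>(dt::real) (Df :: nat \<Rightarrow> real \<Rightarrow> 'a::banach) (ft :: real \<Rightarrow> 'a) (n::nat).
     dt > 0 \<and> Cr_derivs r T Df \<and> continuous_on {0..T} ft
     \<and> (\<forall>k<r. Df k 0 = 0) \<and> ft 0 = 0 \<and> real n * dt \<le> T \<longrightarrow>
     norm (integral {0..real n * dt} (Df 0) - cq_integral p dt ft n)
       \<le> C * (real n * dt) *
          (dt ^ r * (SUP \<tau>\<in>{0..real n * dt}. norm (Df r \<tau>))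
           + (SUP \<tau>\<in>{0..real n * dt}. norm (Df 0 \<tau> - ft \<tau>)))"
proof (intro exI[of _ 2] allI impI, elim conjE)
  fix dt :: real and Df :: "nat \<Rightarrow> real \<Rightarrow> 'a" and ft :: "real \<Rightarrow> 'a" and n :: nat
  assume "dt > 0" "Cr_derivs r T Df" "continuous_on {0..T} ft" "\<forall>k<r. Df k 0 = 0" "ft 0 = 0"
    "real n * dt \<le> T"
  then have sub: "{0..real n * dt} \<subseteq> {0..T}"
    by auto
  have deriv: "(Df k has_vector_derivative Df (Suc k) s) (at s within {0..real n * dt})"
    if "k < r" "s \<in> {0..real n * dt}" for k s
    using \<open>Cr_derivs r T Df\<close> that sub unfolding Cr_derivs_def
    by (meson has_vector_derivative_within_subset subsetD)
  have "continuous_on {0..real n * dt} (Df r)"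
    using \<open>Cr_derivs r T Df\<close> sub continuous_on_subset unfolding Cr_derivs_def by blast
  moreover have "continuous_on {0..real n * dt} (Df 0)"
    using deriv[of 0] \<open>1 \<le> r\<close> by (intro continuous_on_vector_derivative) auto
  then have "continuous_on {0..real n * dt} (\<lambda>s. Df 0 s - ft s)"
    using continuous_on_subset[OF \<open>continuous_on {0..T} ft\<close> sub] by (rule continuous_on_diff)
  ultimately show "norm (integral {0..real n * dt} (Df 0) - cq_integral p dt ft n)
      \<le> 2 * (real n * dt) * (dt ^ r * (SUP \<tau>\<in>{0..real n * dt}. norm (Df r \<tau>))
        + (SUP \<tau>\<in>{0..real n * dt}. norm (Df 0 \<tau> - ft \<tau>)))"
    using assms(2-4) \<open>dt > 0\<close> \<open>\<forall>k<r. Df k 0 = 0\<close> \<open>ft 0 = 0\<close> deriv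
    by (intro cq_integral_error norm_le_SUP_norm) auto
qed

end
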